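(* Let $\mathcal{X}$ be an instance space and $\mathcal{Y}$ a finite label set. Let $\hat f:\mathcal{X}\to\mathbb{P}(\mathcal{Y})$ be a fixed probabilistic classifier (e.g. trained on a separate proper training set, independent of the data below), and write $\hat f(x)_y$ for the probability it assigns to label $y$ at $x$. Let $(x_j,y_j)$, $j\in\mathcal{I}_2$, be calibration points, each observed only through a candidate set $S_j\subseteq\mathcal{Y}$ with $y_j\in S_j$, and let $(x_{new},y_{new})$ be a test point. Define the multiset of scores $$\mathcal{E}_{\max}:=\Big\{\,1-\min_{y\in S_j}\hat f(x_j)_y : j\in\mathcal{I}_2\Big\}.$$ If the points $\{(x_j,y_j):j\in\mathcal{I}_2\}\cup\{(x_{new},y_{new})\}$ are exchangeable, then for every $\epsilon\in(0,1]$, $$\mathbb{P}\big(y_{new}\in\mathcal{T}(x_{new},\hat f,\mathcal{E}_{\max},\epsilon)\big)\ge 1-\epsilon .$$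
   Context: For a finite multiset $\mathcal{E}$ of real numbers and $\epsilon\in(0,1]$, the critical score $q(\mathcal{E},\epsilon)$ is the $\lceil(1+|\mathcal{E}|)(1-\epsilon)\rceil$-th smallest element of $\mathcal{E}$ (counted with multiplicity); if this index exceeds $|\mathcal{E}|$, $q(\mathcal{E},\epsilon)$ is taken to be $+\infty$. For $x\in\mathcal{X}$, the prediction set is $\mathcal{T}(x,\hat f,\mathcal{E},\epsilon):=\{y\in\mathcal{Y}:\hat f(x)_y\ge 1-q(\mathcal{E},\epsilon)\}$. *)

theory Defs
  imports "HOL-Probability.Probability" "HOL-Combinatorics.Permutations"
begin

text \<open>If the index is 0 (only possible for eps = 1) we use -infinity (empty prediction set);
  the theorem is trivial in that case.\<close>
definition critical_score :: "real multiset \<Rightarrow> real \<Rightarrow> ereal" where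
  "critical_score E \<epsilon> =
     (let k = nat \<lceil>(1 + real (size E)) * (1 - \<epsilon>)\<rceil> in
      if size E < k then \<infinity>
      else if k = 0 then -\<infinity>
      else ereal (sorted_list_of_multiset E ! (k - 1)))"

definition pred_set :: "'x \<Rightarrow> ('x \<Rightarrow> 'y \<Rightarrow> real) \<Rightarrow> real multiset \<Rightarrow> real \<Rightarrow> 'y set" where
  "pred_set x f E \<epsilon> = {y. 1 - critical_score E \<epsilon> \<le> ereal (f x y)}"

definition prob_classifier :: "'x measure \<Rightarrow> ('x \<Rightarrow> 'y::finite \<Rightarrow> real) \<Rightarrow> bool" where
  "prob_classifier MX f \<longleftrightarrow>
     (\<forall>x y. 0 \<le> f x y) \<and> (\<forall>x. (\<Sum>y\<in>UNIV. f x y) = 1) \<and>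
     (\<forall>y. (\<lambda>x. f x y) \<in> borel_measurable MX)"

definition E_max :: "('x \<Rightarrow> 'y \<Rightarrow> real) \<Rightarrow> (nat \<Rightarrow> 'x) \<Rightarrow> (nat \<Rightarrow> 'y set) \<Rightarrow> nat \<Rightarrow> real multiset" where
  "E_max f xs S n = image_mset (\<lambda>j. 1 - Min ((\<lambda>y. f (xs j) y) ` S j)) (mset [0..<n])"

definition exchangeable :: "'a measure \<Rightarrow> 'x measure \<Rightarrow> 'y measure \<Rightarrow> nat \<Rightarrow>
    (nat \<Rightarrow> 'a \<Rightarrow> 'x) \<Rightarrow> (nat \<Rightarrow> 'a \<Rightarrow> 'y) \<Rightarrow> bool" where
  "exchangeable M MX MY n X Y \<longleftrightarrow>
     (\<forall>\<pi>. \<pi> permutes {0..n} \<longrightarrow>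
        distr M (PiM {0..n} (\<lambda>_. MX \<Otimes>\<^sub>M MY)) (\<lambda>\<omega>. \<lambda>i\<in>{0..n}. (X (\<pi> i) \<omega>, Y (\<pi> i) \<omega>)) =
        distr M (PiM {0..n} (\<lambda>_. MX \<Otimes>\<^sub>M MY)) (\<lambda>\<omega>. \<lambda>i\<in>{0..n}. (X i \<omega>, Y i \<omega>)))"

end

theory Submission
  imports Defs
begin

text \<open>Let \<open>R\<^sub>j = 1 - f(x\<^sub>j)\<^sub>y\<^sub>j\<close> be the score of the true label. Since \<open>y\<^sub>j \<in> S\<^sub>j\<close>,
  the score of the \<open>j\<close>-th calibration point in \<open>E_max\<close> dominates \<open>R\<^sub>j\<close>, so the test label is
  covered as soon as fewer than \<open>k = \<lceil>(n + 1)(1 - \<epsilon>)\<rceil>\<close> of the \<open>R\<^sub>j\<close> lie strictly below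
  \<open>R\<^sub>n\<^sub>e\<^sub>w\<close>. By exchangeability this event has the same probability for every one of the
  \<open>n + 1\<close> points in the role of the test point, and for every outcome at least \<open>k\<close> of the
  \<open>n + 1\<close> events occur, so its probability is at least \<open>k / (n + 1) \<ge> 1 - \<epsilon>\<close>.\<close>

definition strict_rank :: "('i \<Rightarrow> 'a::linorder) \<Rightarrow> 'i set \<Rightarrow> 'i \<Rightarrow> nat" where
  "strict_rank R I i = card {j \<in> I. R j < R i}"

lemma strict_rank_permutes:
  assumes "\<pi> permutes I" "i \<in> I"
  shows "strict_rank (\<lambda>j. R (\<pi> j)) I i = strict_rank R I (\<pi> i)"
proof -
  have "bij_betw \<pi> {j \<in> I. R (\<pi> j) < R (\<pi> i)} {j \<in> I. R j < R (\<pi> i)}"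
    using permutes_imp_bij[OF assms(1)] permutes_in_image[OF assms(1)]
    by (auto simp: bij_betw_def inj_on_def image_iff)
  then show ?thesis
    unfolding strict_rank_def by (rule bij_betw_same_card)
qed

lemma strict_rank_cong:
  assumes "\<And>j. j \<in> I \<Longrightarrow> R j = R' j" "i \<in> I"
  shows "strict_rank R I i = strict_rank R' I i"
  unfolding strict_rank_def using assms by (metis (mono_tags, lifting))

lemma card_strict_rank_less_ge:
  assumes "finite I" "k \<le> card I"
  shows "k \<le> card {i \<in> I. strict_rank R I i < k}"
proof (cases "\<forall>i \<in> I. strict_rank R I i < k")
  case True
  then show ?thesis using assms(2) by (simp add: Collect_conj_eq Int_absorb2 subset_eq)
next
  case False
  define B where "B = {i \<in> I. k \<le> strict_rank R I i}"
  define i0 where "i0 = arg_min_on R B"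
  have "finite B" "B \<noteq> {}" using assms(1) False by (auto simp: B_def not_less)
  then have i0: "i0 \<in> B" "\<And>i. i \<in> B \<Longrightarrow> R i0 \<le> R i"
    unfolding i0_def using arg_min_if_finite[of B R] not_le by auto
  \<comment> \<open>By minimality of \<open>R i0\<close> in \<open>B\<close>, the \<open>\<ge> k\<close> indices below \<open>i0\<close> all lie outside \<open>B\<close>.\<close>
  have "{j \<in> I. R j < R i0} \<subseteq> {i \<in> I. strict_rank R I i < k}"
    using i0(2) by (force simp: B_def not_le)
  then have "card {j \<in> I. R j < R i0} \<le> card {i \<in> I. strict_rank R I i < k}"
    using assms(1) by (intro card_mono) auto
  moreover have "k \<le> card {j \<in> I. R j < R i0}"
    using i0(1) by (simp add: B_def strict_rank_def)
  ultimately show ?thesis by simp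
qed

lemma card_less_Min_le_strict_rank:
  fixes f :: "'x \<Rightarrow> 'y::finite \<Rightarrow> real" and n :: nat
  assumes "\<And>j. j < n \<Longrightarrow> y j \<in> S j"
  shows "card {j \<in> {..<n}. f (x n) (y n) < Min (f (x j) ` S j)}
    \<le> strict_rank (\<lambda>j. 1 - f (x j) (y j)) {0..n} n"
proof -
  have "{j \<in> {..<n}. f (x n) (y n) < Min (f (x j) ` S j)}
      \<subseteq> {j \<in> {0..n}. 1 - f (x j) (y j) < 1 - f (x n) (y n)}"
  proof
    fix j assume j: "j \<in> {j \<in> {..<n}. f (x n) (y n) < Min (f (x j) ` S j)}"
    then have "Min (f (x j) ` S j) \<le> f (x j) (y j)"
      using assms by (intro Min_le) auto
    with j show "j \<in> {j \<in> {0..n}. 1 - f (x j) (y j) < 1 - f (x n) (y n)}"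
      by auto
  qed
  then show ?thesis
    unfolding strict_rank_def by (intro card_mono) auto
qed

lemma le_sorted_nth_iff:
  fixes xs :: "'a::linorder list"
  assumes "sorted xs" "i < length xs"
  shows "r \<le> xs ! i \<longleftrightarrow> length (filter (\<lambda>e. e < r) xs) \<le> i"
proof -
  let ?L = "{m. m < length xs \<and> xs ! m < r}"
  have len: "length (filter (\<lambda>e. e < r) xs) = card ?L"
    by (simp add: length_filter_conv_card)
  have "?L \<subseteq> {..<i}" if "r \<le> xs ! i"
    using that assms sorted_nth_mono[OF assms(1), of i] by (force simp: not_less[symmetric])
  moreover have "{..i} \<subseteq> ?L" if "xs ! i < r"
    using that assms sorted_nth_mono[OF assms(1), of _ i] by (force intro: le_less_trans)
  moreover have "card ?L \<le> i" if "?L \<subseteq> {..<i}"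
    using card_mono[OF finite_lessThan that] by simp
  moreover have "i < card ?L" if "{..i} \<subseteq> ?L"
    using card_mono[OF _ that] by simp
  ultimately show ?thesis
    unfolding len by (meson not_le)
qed

lemma ereal_le_critical_score_iff:
  "ereal r \<le> critical_score E \<epsilon> \<longleftrightarrow>
     size (filter_mset (\<lambda>e. e < r) E) < nat \<lceil>(1 + real (size E)) * (1 - \<epsilon>)\<rceil>"
proof -
  define k where "k = nat \<lceil>(1 + real (size E)) * (1 - \<epsilon>)\<rceil>"
  define xs where "xs = sorted_list_of_multiset E"
  have "mset xs = E"
    unfolding xs_def by simp
  then have len: "length xs = size E"
    and filt: "length (filter (\<lambda>e. e < r) xs) = size (filter_mset (\<lambda>e. e < r) E)"
    by (metis size_mset, metis mset_filter size_mset)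
  consider "size E < k" | "k = 0" | "0 < k" "k \<le> size E"
    by linarith
  then show ?thesis
  proof cases
    case 1
    then show ?thesis
      using order.strict_trans1[OF size_filter_mset_lesseq]
      by (simp add: critical_score_def Let_def k_def[symmetric])
  next
    case 2
    then show ?thesis
      by (simp add: critical_score_def Let_def k_def[symmetric])
  next
    case 3
    then have "r \<le> xs ! (k - 1) \<longleftrightarrow> length (filter (\<lambda>e. e < r) xs) \<le> k - 1"
      using len by (intro le_sorted_nth_iff) (auto simp: xs_def)
    with 3 show ?thesis
      by (auto simp: critical_score_def Let_def k_def[symmetric] xs_def[symmetric] filt)
  qed
qed

lemma mem_pred_set_iff:
  "y \<in> pred_set x f E \<epsilon> \<longleftrightarrow> ereal (1 - f x y) \<le> critical_score E \<epsilon>"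
  unfolding pred_set_def by (cases "critical_score E \<epsilon>") (auto simp: one_ereal_def)

lemma size_filter_E_max:
  "size (filter_mset P (E_max f xs S n)) = card {j \<in> {..<n}. P (1 - Min (f (xs j) ` S j))}"
  unfolding E_max_def by (simp add: filter_mset_image_mset flip: mset_set_upto_eq_mset_upto)

lemma mem_pred_set_E_max_iff:
  "y \<in> pred_set x f (E_max f xs S n) \<epsilon> \<longleftrightarrow>
     card {j \<in> {..<n}. f x y < Min (f (xs j) ` S j)} < nat \<lceil>(1 + real n) * (1 - \<epsilon>)\<rceil>"
proof -
  have "size (E_max f xs S n) = n"
    unfolding E_max_def by simp
  then show ?thesis
    by (simp add: mem_pred_set_iff ereal_le_critical_score_iff size_filter_E_max)
qed

lemma borel_measurable_apply_countable:
  fixes f :: "'x \<Rightarrow> 'y::countable \<Rightarrow> real"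
  assumes "\<And>y. (\<lambda>x. f x y) \<in> borel_measurable MX"
    and "X \<in> measurable M MX" and "Y \<in> measurable M (count_space UNIV)"
  shows "(\<lambda>\<omega>. f (X \<omega>) (Y \<omega>)) \<in> borel_measurable M"
  using measurable_compose_countable[OF measurable_compose[OF assms(2,1)] assms(3)] .

lemma borel_measurable_prob_classifier:
  fixes f :: "'x \<Rightarrow> 'y::finite \<Rightarrow> real"
  assumes "prob_classifier MX f"
  shows "(\<lambda>p. f (fst p) (snd p)) \<in> borel_measurable (MX \<Otimes>\<^sub>M count_space UNIV)"
proof -
  have "(\<lambda>x. f x y) \<in> borel_measurable MX" for y
    using assms by (simp add: prob_classifier_def)
  from borel_measurable_apply_countable[OF this measurable_fst measurable_snd]
  show ?thesis .
qed

lemma measurable_card_less: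
  assumes "finite J" "\<And>j. j \<in> J \<Longrightarrow> Measurable.pred M (P j)"
  shows "Measurable.pred M (\<lambda>\<omega>. card {j \<in> J. P j \<omega>} < k)"
proof -
  have "(\<lambda>\<omega>. \<Sum>j\<in>J. of_bool (P j \<omega>) :: real) \<in> borel_measurable M"
    using assms by (intro borel_measurable_sum) measurable
  then have "(\<lambda>\<omega>. real (card {j \<in> J. P j \<omega>})) \<in> borel_measurable M"
    using assms(1) by (simp add: Collect_conj_eq)
  then have "Measurable.pred M (\<lambda>\<omega>. real (card {j \<in> J. P j \<omega>}) < real k)"
    by measurable
  then show ?thesis
    by simp
qed

lemma measurable_strict_rank_less:
  fixes R :: "'i \<Rightarrow> 'a \<Rightarrow> real"
  assumes "finite I" "\<And>j. j \<in> I \<Longrightarrow> R j \<in> borel_measurable M" "i \<in> I"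
  shows "Measurable.pred M (\<lambda>\<omega>. strict_rank (\<lambda>j. R j \<omega>) I i < k)"
  unfolding strict_rank_def using assms
  by (intro measurable_card_less borel_measurable_pred_less) auto

lemma borel_measurable_Min_image:
  fixes f :: "'x \<Rightarrow> 'y::finite \<Rightarrow> real"
  assumes "\<And>y. (\<lambda>x. f x y) \<in> borel_measurable MX"
    and "X \<in> measurable M MX" and "S \<in> measurable M (count_space UNIV)"
  shows "(\<lambda>\<omega>. Min (f (X \<omega>) ` S \<omega>)) \<in> borel_measurable M"
proof -
  have "(\<lambda>x. Min (f x ` T)) \<in> borel_measurable MX" for T :: "'y set"
    using borel_measurable_Min[of T "\<lambda>y x. f x y"] assms(1) by simp
  from borel_measurable_apply_countable[where f="\<lambda>x T. Min (f x ` T)", OF this assms(2,3)]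
  show ?thesis .
qed

lemma measurable_mem_pred_set_E_max:
  fixes f :: "'x \<Rightarrow> 'y::finite \<Rightarrow> real"
  assumes "prob_classifier MX f" "\<And>i. i \<le> n \<Longrightarrow> X i \<in> measurable M MX"
    and "Y \<in> measurable M (count_space UNIV)"
    and "\<And>j. j < n \<Longrightarrow> S j \<in> measurable M (count_space UNIV)"
  shows "Measurable.pred M (\<lambda>\<omega>. Y \<omega> \<in> pred_set (X n \<omega>) f (E_max f (\<lambda>j. X j \<omega>) (\<lambda>j. S j \<omega>) n) \<epsilon>)"
proof -
  have f: "(\<lambda>x. f x y) \<in> borel_measurable MX" for y
    using assms(1) by (simp add: prob_classifier_def)
  have "(\<lambda>\<omega>. Min (f (X j \<omega>) ` S j \<omega>)) \<in> borel_measurable M" if "j < n" for j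
    using borel_measurable_Min_image[OF f assms(2) assms(4)[OF that]] that by simp
  moreover have "(\<lambda>\<omega>. f (X n \<omega>) (Y \<omega>)) \<in> borel_measurable M"
    using borel_measurable_apply_countable[OF f assms(2,3)] by simp
  ultimately show ?thesis
    unfolding mem_pred_set_E_max_iff by (intro measurable_card_less borel_measurable_pred_less) auto
qed

lemma (in finite_measure) mult_measure_space_le_sum_measure:
  assumes "finite I" "\<And>i. i \<in> I \<Longrightarrow> A i \<in> sets M"
    and "\<And>\<omega>. \<omega> \<in> space M \<Longrightarrow> k \<le> card {i \<in> I. \<omega> \<in> A i}"
  shows "real k * measure M (space M) \<le> (\<Sum>i\<in>I. measure M (A i))"
proof -
  have int: "integrable M (indicator (A i) :: 'a \<Rightarrow> real)" if "i \<in> I" for i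
    using assms(2)[OF that] emeasure_finite
    by (intro integrable_real_indicator) (auto simp: less_top[symmetric])
  then have int_sum: "integrable M (\<lambda>\<omega>. \<Sum>i\<in>I. indicator (A i) \<omega> :: real)"
    by (intro Bochner_Integration.integrable_sum)
  have card_eq: "(\<Sum>i\<in>I. indicator (A i) \<omega>) = real (card {i \<in> I. \<omega> \<in> A i})" for \<omega>
    using assms(1) by (simp add: indicator_def Collect_conj_eq)
  have "real k * measure M (space M) = (\<integral>\<omega>. real k \<partial>M)"
    by simp
  also have "\<dots> \<le> (\<integral>\<omega>. (\<Sum>i\<in>I. indicator (A i) \<omega>) \<partial>M)"
    using assms(3) int_sum by (intro integral_mono) (auto simp: card_eq)
  also have "\<dots> = (\<Sum>i\<in>I. measure M (A i))"
    using int assms(2) by (simp add: integral_sum)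
  finally show ?thesis .
qed

lemma exchangeable_measure_permute:
  assumes "exchangeable M MX MY n X Y" "\<pi> permutes {0..n}"
    and "\<And>i. i \<le> n \<Longrightarrow> X i \<in> measurable M MX" "\<And>i. i \<le> n \<Longrightarrow> Y i \<in> measurable M MY"
    and "Measurable.pred (PiM {0..n} (\<lambda>_. MX \<Otimes>\<^sub>M MY)) P"
  shows "measure M {\<omega> \<in> space M. P (\<lambda>i\<in>{0..n}. (X (\<pi> i) \<omega>, Y (\<pi> i) \<omega>))} =
         measure M {\<omega> \<in> space M. P (\<lambda>i\<in>{0..n}. (X i \<omega>, Y i \<omega>))}"
proof -
  let ?N = "PiM {0..n} (\<lambda>_. MX \<Otimes>\<^sub>M MY)"
  let ?G = "{z \<in> space ?N. P z}"
  define Z where "Z \<sigma> = (\<lambda>\<omega>. \<lambda>i\<in>{0..n}. (X (\<sigma> i) \<omega>, Y (\<sigma> i) \<omega>))" for \<sigma> :: "nat \<Rightarrow> nat"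
  have G: "?G \<in> sets ?N"
    using assms(5) by measurable
  have Z: "Z \<sigma> \<in> measurable M ?N" if "\<sigma> permutes {0..n}" for \<sigma>
    unfolding Z_def
  proof (rule measurable_restrict)
    fix i assume "i \<in> {0..n}"
    then have "\<sigma> i \<le> n"
      using permutes_in_image[OF that] by simp
    then show "(\<lambda>\<omega>. (X (\<sigma> i) \<omega>, Y (\<sigma> i) \<omega>)) \<in> measurable M (MX \<Otimes>\<^sub>M MY)"
      using assms(3,4) by measurable
  qed
  have event_eq: "{\<omega> \<in> space M. P (Z \<sigma> \<omega>)} = Z \<sigma> -` ?G \<inter> space M"
    if "\<sigma> permutes {0..n}" for \<sigma>
    using measurable_space[OF Z[OF that]] by auto
  have "distr M ?N (Z \<pi>) = distr M ?N (Z id)"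
    using assms(1,2) by (simp add: exchangeable_def Z_def)
  then have "measure M (Z \<pi> -` ?G \<inter> space M) = measure M (Z id -` ?G \<inter> space M)"
    using measure_distr[OF Z[OF assms(2)] G] measure_distr[OF Z[OF permutes_id] G] by simp
  then show ?thesis
    using event_eq[OF assms(2)] event_eq[OF permutes_id] by (simp add: Z_def)
qed

lemma exchangeable_measure_strict_rank_eq:
  fixes score :: "'x \<times> 'y \<Rightarrow> real"
  assumes "exchangeable M MX MY n X Y"
    and "\<And>i. i \<le> n \<Longrightarrow> X i \<in> measurable M MX" "\<And>i. i \<le> n \<Longrightarrow> Y i \<in> measurable M MY"
    and "score \<in> borel_measurable (MX \<Otimes>\<^sub>M MY)" "i \<le> n"
  shows "measure M {\<omega> \<in> space M. strict_rank (\<lambda>j. score (X j \<omega>, Y j \<omega>)) {0..n} i < k} =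
         measure M {\<omega> \<in> space M. strict_rank (\<lambda>j. score (X j \<omega>, Y j \<omega>)) {0..n} n < k}"
proof -
  let ?\<pi> = "Transposition.transpose i n"
  let ?P = "\<lambda>z. strict_rank (\<lambda>j. score (z j)) {0..n} n < k"
  have \<pi>: "?\<pi> permutes {0..n}"
    using assms(5) by (intro permutes_swap_id) auto
  have "(\<lambda>z. score (z j)) \<in> borel_measurable (PiM {0..n} (\<lambda>_. MX \<Otimes>\<^sub>M MY))"
    if "j \<in> {0..n}" for j
    using measurable_compose[OF measurable_component_singleton[OF that] assms(4)] .
  then have "Measurable.pred (PiM {0..n} (\<lambda>_. MX \<Otimes>\<^sub>M MY)) ?P"
    by (intro measurable_strict_rank_less) auto
  from exchangeable_measure_permute[OF assms(1) \<pi> assms(2,3) this]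
  have "measure M {\<omega> \<in> space M. ?P (\<lambda>j\<in>{0..n}. (X (?\<pi> j) \<omega>, Y (?\<pi> j) \<omega>))} =
        measure M {\<omega> \<in> space M. ?P (\<lambda>j\<in>{0..n}. (X j \<omega>, Y j \<omega>))}" .
  moreover have "?P (\<lambda>j\<in>{0..n}. (X (?\<pi> j) \<omega>, Y (?\<pi> j) \<omega>)) \<longleftrightarrow>
      strict_rank (\<lambda>j. score (X j \<omega>, Y j \<omega>)) {0..n} i < k" for \<omega>
    using strict_rank_permutes[OF \<pi>, of n "\<lambda>j. score (X j \<omega>, Y j \<omega>)"]
    by (subst strict_rank_cong[where R'="\<lambda>j. score (X (?\<pi> j) \<omega>, Y (?\<pi> j) \<omega>)"]) auto
  moreover have "?P (\<lambda>j\<in>{0..n}. (X j \<omega>, Y j \<omega>)) \<longleftrightarrow>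
      strict_rank (\<lambda>j. score (X j \<omega>, Y j \<omega>)) {0..n} n < k" for \<omega>
    by (subst strict_rank_cong[where R'="\<lambda>j. score (X j \<omega>, Y j \<omega>)"]) auto
  ultimately show ?thesis
    by simp
qed

lemma (in prob_space) exchangeable_strict_rank_prob:
  fixes score :: "'x \<times> 'y \<Rightarrow> real"
  assumes "exchangeable M MX MY n X Y"
    and "\<And>i. i \<le> n \<Longrightarrow> X i \<in> measurable M MX" "\<And>i. i \<le> n \<Longrightarrow> Y i \<in> measurable M MY"
    and "score \<in> borel_measurable (MX \<Otimes>\<^sub>M MY)" "k \<le> n + 1"
  shows "real k \<le> (1 + real n) *
    prob {\<omega> \<in> space M. strict_rank (\<lambda>j. score (X j \<omega>, Y j \<omega>)) {0..n} n < k}"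
proof -
  define A where "A i = {\<omega> \<in> space M. strict_rank (\<lambda>j. score (X j \<omega>, Y j \<omega>)) {0..n} i < k}" for i
  have "(\<lambda>\<omega>. score (X j \<omega>, Y j \<omega>)) \<in> borel_measurable M" if "j \<le> n" for j
    using measurable_compose[OF measurable_Pair[OF assms(2,3)[OF that]] assms(4)] .
  then have A_sets: "A i \<in> sets M" if "i \<le> n" for i
    unfolding A_def using that by (intro predE measurable_strict_rank_less) auto
  have "k \<le> card {i \<in> {0..n}. \<omega> \<in> A i}" if "\<omega> \<in> space M" for \<omega>
    using card_strict_rank_less_ge[of "{0..n}" k "\<lambda>j. score (X j \<omega>, Y j \<omega>)"] assms(5) that
    by (simp add: A_def)
  then have "real k * prob (space M) \<le> (\<Sum>i\<in>{0..n}. prob (A i))"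
    using A_sets by (intro mult_measure_space_le_sum_measure) auto
  also have "\<dots> = (\<Sum>i\<in>{0..n}. prob (A n))"
    unfolding A_def using assms(1-4)
    by (intro sum.cong refl exchangeable_measure_strict_rank_eq) auto
  finally show ?thesis
    by (simp add: A_def prob_space)
qed

theorem theorem1:
  fixes M :: "'a measure" and MX :: "'x measure"
    and f :: "'x \<Rightarrow> 'y::finite \<Rightarrow> real"
    and X :: "nat \<Rightarrow> 'a \<Rightarrow> 'x" and Y :: "nat \<Rightarrow> 'a \<Rightarrow> 'y"
    and S :: "nat \<Rightarrow> 'a \<Rightarrow> 'y set"
    and n :: nat and \<epsilon> :: real
  assumes "prob_space M"
    and "prob_classifier MX f"
    and "\<And>i. i \<le> n \<Longrightarrow> X i \<in> measurable M MX"
    and "\<And>i. i \<le> n \<Longrightarrow> Y i \<in> measurable M (count_space UNIV)"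
    and "\<And>j. j < n \<Longrightarrow> S j \<in> measurable M (count_space UNIV)"
    and "\<And>j \<omega>. j < n \<Longrightarrow> \<omega> \<in> space M \<Longrightarrow> Y j \<omega> \<in> S j \<omega>"
    and "exchangeable M MX (count_space UNIV) n X Y"
    and "0 < \<epsilon>" and "\<epsilon> \<le> 1"
  shows "measure M {\<omega> \<in> space M.
            Y n \<omega> \<in> pred_set (X n \<omega>) f (E_max f (\<lambda>j. X j \<omega>) (\<lambda>j. S j \<omega>) n) \<epsilon>} \<ge> 1 - \<epsilon>"
proof -
  interpret prob_space M by fact
  define k where "k = nat \<lceil>(1 + real n) * (1 - \<epsilon>)\<rceil>"
  define score where "score p = 1 - f (fst p) (snd p)" for p :: "'x \<times> 'y"
  let ?E = "{\<omega> \<in> space M.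
    Y n \<omega> \<in> pred_set (X n \<omega>) f (E_max f (\<lambda>j. X j \<omega>) (\<lambda>j. S j \<omega>) n) \<epsilon>}"
  let ?A = "{\<omega> \<in> space M. strict_rank (\<lambda>j. score (X j \<omega>, Y j \<omega>)) {0..n} n < k}"
  have "?A \<subseteq> ?E"
  proof
    fix \<omega> assume "\<omega> \<in> ?A"
    then have "card {j \<in> {..<n}. f (X n \<omega>) (Y n \<omega>) < Min (f (X j \<omega>) ` S j \<omega>)}
        \<le> strict_rank (\<lambda>j. 1 - f (X j \<omega>) (Y j \<omega>)) {0..n} n"
      using assms(6) by (intro card_less_Min_le_strict_rank) auto
    with \<open>\<omega> \<in> ?A\<close> show "\<omega> \<in> ?E"
      by (simp add: mem_pred_set_E_max_iff k_def score_def)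
  qed
  have "real k \<le> (1 + real n) * prob ?A"
  proof (rule exchangeable_strict_rank_prob[OF assms(7,3,4)])
    show "score \<in> borel_measurable (MX \<Otimes>\<^sub>M count_space UNIV)"
      using borel_measurable_prob_classifier[OF assms(2)] unfolding score_def by measurable
    show "k \<le> n + 1"
      unfolding k_def using assms(8) by (simp add: nat_le_iff ceiling_le_iff mult_le_cancel_left1)
  qed
  moreover have "(1 + real n) * (1 - \<epsilon>) \<le> real k"
    unfolding k_def by linarith
  ultimately have "1 - \<epsilon> \<le> prob ?A"
    by (smt (verit) mult_le_cancel_left_pos of_nat_0_le_iff)
  also have "\<dots> \<le> prob ?E"
    using \<open>?A \<subseteq> ?E\<close> measurable_mem_pred_set_E_max[OF assms(2,3) assms(4)[of n] assms(5)]
    by (intro finite_measure_mono) auto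
  finally show ?thesis .
qed

end
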